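(* Let $\Omega=\bigcup_{k=1}^K\Omega_k$ be a partition of a domain $\Omega$, and let $X$, $Y$, $Z$, $V$, the linear operators $A:X\to Y$, $B:X\to Z$, the data $f\in Y$, $g\in Z$, and the orthonormal bases $\{\Phi_{k,i}\}_{i\ge1}$ of $Y|_{\Omega_k}$ be as in the context. Assume the problem $Au=f$ in $\Omega$, $Bu=g$ on $\partial\Omega$ has a unique solution $u^*\in V$ with an approximating sequence $\{u_n^*\}\subset X$, and assume the norm relation: there are constants $C_1,C_2>0$ such that $C_1\|v\|_V\le\|Av\|_Y+\|Bv\|_Z\le C_2\|v\|_X$ for all $v\in X$. For $k=1,\dots,K$ let $G_k$ be a compact subset of $Y|_{\Omega_k}$ containing $\{(Au_n^*-f)|_{\Omega_k}\}_{n\ge1}$ and let $\tilde V_K=\{v\in X:(Av-f)|_{\Omega_k}\in G_k,\ k=1,\dots,K\}$. Let $\epsilon>0$ and let $\mathbf N_{\epsilon,K}=(N_{\epsilon,1},\dots,N_{\epsilon,K})$ be integers such that $\mathcal J_\tau^{h,\mathbf N_{\epsilon,K}}(v)\ge\mathcal J_\tau(v)-\epsilon$ for all $v\in\tilde V_K$ (such integers exist). Fix $\tau\ge1$. Let $\{\mathfrak N_{\theta,n}\}_{n\ge1}$ be a sequence of function classes (neural network classes), let $\delta_n\to0$, and let $u_n\in\mathfrak N_{\theta,n}\cap\tilde V_K$ be a quasi-minimizer, i.e. $$\mathcal J_\tau^{h,\mathbf N_{\epsilon,K}}(u_n)\le\inf_{w\in\mathfrak N_{\theta,n}\cap\tilde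 V_K}\mathcal J_\tau^{h,\mathbf N_{\epsilon,K}}(w)+\delta_n .$$ Then $$\|u_n-u^*\|_V\le\sqrt2\,C_1^{-1}\Big(\mathcal J_\tau^{h,\mathbf N_{\epsilon,K}}(u_n)+\delta_n+\epsilon\Big)^{1/2}.$$
   Context: Setting: $X$ is a space of functions on $\Omega$ contained in a normed space $V$; $Y$ is a Hilbert space of functions on $\Omega$ and $Y|_{\Omega_k}$ denotes the Hilbert space with the same structure over $\Omega_k$, with $\|w\|_Y^2=\sum_{k=1}^K\|w|_{\Omega_k}\|_{Y|_{\Omega_k}}^2$ (e.g. $Y=L^2$); $Z$ is a normed space of functions on $\partial\Omega$. For each $k$, $\{\Phi_{k,i}\}_{i\ge1}$ is a complete orthonormal basis of $Y|_{\Omega_k}$, and $(w,\Phi_{k,i})_Y$ is the $Y|_{\Omega_k}$ inner product of $w|_{\Omega_k}$ with $\Phi_{k,i}$. Loss functionals: $\mathcal J_\tau(v)=\|f-Av\|_Y^2+\tau\|Bv-g\|_Z^2$ and, for $\mathbf N=(N_1,\dots,N_K)$, $\mathcal J_\tau^{h,\mathbf N}(v)=\sum_{k=1}^K\sum_{i=1}^{N_k}(f-Av,\Phi_{k,i})_Y^2+\tau\|Bv-g\|_Z^2$. Solution concept: $u^*\in V$ is a solution if there is a sequence $\{u_n^*\}\subset X$ (an approximating sequence) with $\|u_n^*-u^*\|_V\to0$ and $\|Au_n^*-f\|_Y+\|Bu_n^*-g\|_Z\to0$. *)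

theory Defs
  imports "HOL-Analysis.Analysis"
begin

definition J_loss ::
  "('v \<Rightarrow> 'y::real_normed_vector) \<Rightarrow> ('v \<Rightarrow> 'z::real_normed_vector)
   \<Rightarrow> 'y \<Rightarrow> 'z \<Rightarrow> real \<Rightarrow> 'v \<Rightarrow> real" where
  "J_loss A B f g \<tau> v = (norm (f - A v))\<^sup>2 + \<tau> * (norm (B v - g))\<^sup>2"

definition Jh_loss ::
  "('v \<Rightarrow> 'y::real_inner) \<Rightarrow> ('v \<Rightarrow> 'z::real_normed_vector)
   \<Rightarrow> 'y \<Rightarrow> 'z \<Rightarrow> real \<Rightarrow> nat \<Rightarrow> (nat \<Rightarrow> 'y \<Rightarrow> 'y) \<Rightarrow> (nat \<Rightarrow> nat \<Rightarrow> 'y)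
   \<Rightarrow> (nat \<Rightarrow> nat) \<Rightarrow> 'v \<Rightarrow> real" where
  "Jh_loss A B f g \<tau> K R \<Phi> N v =
     (\<Sum>k=1..K. \<Sum>i=1..N k. (R k (f - A v) \<bullet> \<Phi> k i)\<^sup>2) + \<tau> * (norm (B v - g))\<^sup>2"

definition norm_on :: "'v::real_vector set \<Rightarrow> ('v \<Rightarrow> real) \<Rightarrow> bool" where
  "norm_on X nX \<longleftrightarrow> subspace X \<and>
     (\<forall>x\<in>X. nX x \<ge> 0 \<and> (nX x = 0 \<longleftrightarrow> x = 0)) \<and>
     (\<forall>x\<in>X. \<forall>y\<in>X. nX (x + y) \<le> nX x + nX y) \<and>
     (\<forall>x\<in>X. \<forall>c. nX (c *\<^sub>R x) = \<bar>c\<bar> * nX x)"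

definition linear_on :: "'v::real_vector set \<Rightarrow> ('v \<Rightarrow> 'w::real_vector) \<Rightarrow> bool" where
  "linear_on X T \<longleftrightarrow> (\<forall>x\<in>X. \<forall>y\<in>X. T (x + y) = T x + T y) \<and>
     (\<forall>x\<in>X. \<forall>c. T (c *\<^sub>R x) = c *\<^sub>R T x)"

definition approx_seq ::
  "'v::real_normed_vector set \<Rightarrow> ('v \<Rightarrow> 'y::real_normed_vector) \<Rightarrow> ('v \<Rightarrow> 'z::real_normed_vector)
   \<Rightarrow> 'y \<Rightarrow> 'z \<Rightarrow> 'v \<Rightarrow> (nat \<Rightarrow> 'v) \<Rightarrow> bool" where
  "approx_seq X A B f g u us \<longleftrightarrow> (\<forall>n. us n \<in> X) \<and>
     (\<lambda>n. norm (us n - u)) \<longlonglongrightarrow> 0 \<and>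
     (\<lambda>n. norm (A (us n) - f) + norm (B (us n) - g)) \<longlonglongrightarrow> 0"

definition is_solution ::
  "'v::real_normed_vector set \<Rightarrow> ('v \<Rightarrow> 'y::real_normed_vector) \<Rightarrow> ('v \<Rightarrow> 'z::real_normed_vector)
   \<Rightarrow> 'y \<Rightarrow> 'z \<Rightarrow> 'v \<Rightarrow> bool" where
  "is_solution X A B f g u \<longleftrightarrow> (\<exists>us. approx_seq X A B f g u us)"

text \<open>R 1, ..., R K model restriction to the pieces Omega_1..Omega_K of the partition:
  orthogonal projections onto mutually orthogonal closed subspaces Y|Omega_k summing to Y,
  with ||w||^2 = sum_k ||w|Omega_k||^2.\<close>
definition restriction_family :: "nat \<Rightarrow> (nat \<Rightarrow> 'y::real_inner \<Rightarrow> 'y) \<Rightarrow> bool" where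
  "restriction_family K R \<longleftrightarrow> K \<ge> 1 \<and>
     (\<forall>k\<in>{1..K}. linear (R k) \<and> (\<forall>w. R k (R k w) = R k w) \<and>
        (\<forall>w w'. R k w \<bullet> w' = w \<bullet> R k w')) \<and>
     (\<forall>j\<in>{1..K}. \<forall>k\<in>{1..K}. j \<noteq> k \<longrightarrow> (\<forall>w. R j (R k w) = 0)) \<and>
     (\<forall>w. w = (\<Sum>k=1..K. R k w)) \<and>
     (\<forall>w. (norm w)\<^sup>2 = (\<Sum>k=1..K. (norm (R k w))\<^sup>2))"

text \<open>Phi 1, Phi 2, ... (indices from 1) is a complete orthonormal basis of the Hilbert space
  S (here S = range of R k, i.e. Y|Omega_k).\<close>
definition complete_ONB :: "'y::real_inner set \<Rightarrow> (nat \<Rightarrow> 'y) \<Rightarrow> bool" where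
  "complete_ONB S \<Phi> \<longleftrightarrow> (\<forall>i\<ge>1. \<Phi> i \<in> S) \<and>
     (\<forall>i\<ge>1. \<forall>j\<ge>1. \<Phi> i \<bullet> \<Phi> j = (if i = j then 1 else 0)) \<and>
     closure (span (\<Phi> ` {1..})) = S"

end

theory Submission
  imports Defs
begin

text \<open>Write \<open>v = u n\<close>. Comparing \<open>v\<close> with the approximating sequence of the solution
  through the lower norm bound and passing to the limit bounds \<open>C1 * norm (v - ustar)\<close> by the
  sum of the two residual norms. This sum is at most \<open>sqrt 2\<close> times the square root of the sum
  of their squares, which is at most \<open>J_loss\<close> because \<open>\<tau> \<ge> 1\<close>; on the admissible set the choice
  of \<open>N\<close> turns this into \<open>Jh_loss + \<epsilon>\<close>. Finally \<open>\<delta> n \<ge> 0\<close>, since a quasi-minimizer cannot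
  lie below the infimum. The remaining hypotheses (compactness of \<open>G k\<close>, the orthonormal bases,
  uniqueness, the upper norm bound) are only needed for the existence of \<open>N\<close>, which is assumed.\<close>

lemma linear_on_diff:
  assumes "subspace X" "linear_on X T" "x \<in> X" "y \<in> X"
  shows "T (x - y) = T x - T y"
proof -
  have "(-1) *\<^sub>R y \<in> X"
    using assms(1,4) by (rule subspace_scale)
  then have "T (x + (-1) *\<^sub>R y) = T x + (-1) *\<^sub>R T y"
    using assms(2-4) unfolding linear_on_def by metis
  then show ?thesis
    by simp
qed

lemma coercive_residual_triangle:
  assumes X: "subspace X" and A: "linear_on X A" and B: "linear_on X B"
    and lower: "\<forall>x\<in>X. C * norm x \<le> norm (A x) + norm (B x)"
    and C: "C \<ge> 0" and v: "v \<in> X" and w: "w \<in> X"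
  shows "C * norm (v - u) \<le> (norm (A v - f) + norm (B v - g))
           + (norm (A w - f) + norm (B w - g)) + C * norm (w - u)"
proof -
  have "C * norm (v - w) \<le> norm (A (v - w)) + norm (B (v - w))"
    using lower v w X by (simp add: subspace_diff)
  also have "\<dots> = norm ((A v - f) - (A w - f)) + norm ((B v - g) - (B w - g))"
    using linear_on_diff[OF X A v w] linear_on_diff[OF X B v w] by simp
  also have "\<dots> \<le> (norm (A v - f) + norm (A w - f)) + (norm (B v - g) + norm (B w - g))"
    by (intro add_mono norm_triangle_ineq4)
  finally have vw: "C * norm (v - w) \<le> \<dots>" .
  have "C * norm (v - u) \<le> C * norm (v - w) + C * norm (w - u)"
    using C norm_diff_triangle_ineq[of v w w u] by (simp add: distrib_left[symmetric] mult_left_mono)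
  then show ?thesis
    using vw by linarith
qed

lemma approx_seq_residual_bound:
  assumes X: "subspace X" and A: "linear_on X A" and B: "linear_on X B"
    and lower: "\<forall>x\<in>X. C * norm x \<le> norm (A x) + norm (B x)"
    and C: "C \<ge> 0" and approx: "approx_seq X A B f g u us" and v: "v \<in> X"
  shows "C * norm (v - u) \<le> norm (A v - f) + norm (B v - g)"
proof (rule tendsto_le[OF trivial_limit_sequentially _ tendsto_const])
  let ?r = "norm (A v - f) + norm (B v - g)"
  have "(\<lambda>m. ?r + (norm (A (us m) - f) + norm (B (us m) - g)) + C * norm (us m - u))
          \<longlonglongrightarrow> ?r + 0 + C * 0"
    using approx unfolding approx_seq_def by (intro tendsto_intros) auto
  then show "(\<lambda>m. ?r + (norm (A (us m) - f) + norm (B (us m) - g)) + C * norm (us m - u))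
               \<longlonglongrightarrow> ?r"
    by simp
  show "\<forall>\<^sub>F m in sequentially. C * norm (v - u)
          \<le> ?r + (norm (A (us m) - f) + norm (B (us m) - g)) + C * norm (us m - u)"
    using approx unfolding approx_seq_def
    by (intro always_eventually allI coercive_residual_triangle[OF X A B lower C v]) blast
qed

lemma sum_le_sqrt2_mult_sqrt_sum_squares:
  fixes a b :: real
  shows "a + b \<le> sqrt 2 * sqrt (a\<^sup>2 + b\<^sup>2)"
  using complex_abs_le_norm[of "Complex a b"] by (simp add: complex_norm)

lemma residuals_sq_le_J_loss:
  assumes "\<tau> \<ge> 1"
  shows "(norm (A v - f))\<^sup>2 + (norm (B v - g))\<^sup>2 \<le> J_loss A B f g \<tau> v"
  using mult_right_mono[OF assms, of "(norm (B v - g))\<^sup>2"]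
  by (simp add: J_loss_def norm_minus_commute)

lemma Jh_loss_nonneg:
  assumes "\<tau> \<ge> 0"
  shows "Jh_loss A B f g \<tau> K R \<Phi> N v \<ge> 0"
  unfolding Jh_loss_def using assms by (intro add_nonneg_nonneg sum_nonneg) auto

lemma quasi_minimizer_slack_nonneg:
  fixes J :: "'a \<Rightarrow> real"
  assumes "x \<in> S" "bdd_below (J ` S)" "J x \<le> (INF y\<in>S. J y) + \<delta>"
  shows "\<delta> \<ge> 0"
  using cINF_lower[OF assms(2,1)] assms(3) by linarith

theorem mainTheorem2:
  fixes X :: "'v::real_normed_vector set"
    and nX :: "'v \<Rightarrow> real"
    and A :: "'v \<Rightarrow> 'y::{real_inner, complete_space}"
    and B :: "'v \<Rightarrow> 'z::real_normed_vector"
    and f :: 'y and g :: 'z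
    and K :: nat and R :: "nat \<Rightarrow> 'y \<Rightarrow> 'y" and \<Phi> :: "nat \<Rightarrow> nat \<Rightarrow> 'y"
    and ustar :: 'v and us :: "nat \<Rightarrow> 'v"
    and C1 C2 :: real
    and G :: "nat \<Rightarrow> 'y set"
    and \<epsilon> \<tau> :: real and N :: "nat \<Rightarrow> nat"
    and NN :: "nat \<Rightarrow> 'v set" and \<delta> :: "nat \<Rightarrow> real" and u :: "nat \<Rightarrow> 'v"
  assumes X: "norm_on X nX"
    and A: "linear_on X A" and B: "linear_on X B"
    and R: "restriction_family K R"
    and Phi: "\<forall>k\<in>{1..K}. complete_ONB (range (R k)) (\<Phi> k)"
    and sol: "is_solution X A B f g ustar"
    and uniq: "\<forall>w. is_solution X A B f g w \<longrightarrow> w = ustar"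
    and approx: "approx_seq X A B f g ustar us"
    and C: "C1 > 0" "C2 > 0"
    and normrel: "\<forall>v\<in>X. C1 * norm v \<le> norm (A v) + norm (B v)
                        \<and> norm (A v) + norm (B v) \<le> C2 * nX v"
    and G: "\<forall>k\<in>{1..K}. compact (G k) \<and> G k \<subseteq> range (R k)
                \<and> (\<forall>n. R k (A (us n) - f) \<in> G k)"
    and eps: "\<epsilon> > 0"
    and Neps: "\<forall>v\<in>{v\<in>X. \<forall>k\<in>{1..K}. R k (A v - f) \<in> G k}.
                 Jh_loss A B f g \<tau> K R \<Phi> N v \<ge> J_loss A B f g \<tau> v - \<epsilon>"
    and tau: "\<tau> \<ge> 1"
    and delta: "\<delta> \<longlonglongrightarrow> 0"
    and un: "\<forall>n. u n \<in> NN n \<inter> {v\<in>X. \<forall>k\<in>{1..K}. R k (A v - f) \<in> G k}"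
    and quasi: "\<forall>n. Jh_loss A B f g \<tau> K R \<Phi> N (u n) \<le>
                 (INF w\<in>NN n \<inter> {v\<in>X. \<forall>k\<in>{1..K}. R k (A v - f) \<in> G k}.
                    Jh_loss A B f g \<tau> K R \<Phi> N w) + \<delta> n"
  shows "\<forall>n. norm (u n - ustar) \<le>
           sqrt 2 * inverse C1 * sqrt (Jh_loss A B f g \<tau> K R \<Phi> N (u n) + \<delta> n + \<epsilon>)"
proof
  fix n
  let ?Jh = "Jh_loss A B f g \<tau> K R \<Phi> N"
  let ?V = "{v\<in>X. \<forall>k\<in>{1..K}. R k (A v - f) \<in> G k}"
  let ?a = "norm (A (u n) - f)" and ?b = "norm (B (u n) - g)"
  have "u n \<in> NN n \<inter> ?V"
    using un by blast
  then have "u n \<in> X" and J_le: "J_loss A B f g \<tau> (u n) - \<epsilon> \<le> ?Jh (u n)"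
    using Neps by auto
  have "\<delta> n \<ge> 0"
  proof (rule quasi_minimizer_slack_nonneg[of "u n" "NN n \<inter> ?V" ?Jh])
    show "u n \<in> NN n \<inter> ?V" by fact
    show "bdd_below (?Jh ` (NN n \<inter> ?V))"
      using tau by (intro bdd_belowI2[where m = 0] Jh_loss_nonneg) simp
    show "?Jh (u n) \<le> (INF w\<in>NN n \<inter> ?V. ?Jh w) + \<delta> n"
      using quasi by blast
  qed
  have "C1 * norm (u n - ustar) \<le> ?a + ?b"
    using X normrel C(1) by (intro approx_seq_residual_bound[OF _ A B _ _ approx \<open>u n \<in> X\<close>])
      (auto simp: norm_on_def)
  also have "\<dots> \<le> sqrt 2 * sqrt (?a\<^sup>2 + ?b\<^sup>2)"
    by (rule sum_le_sqrt2_mult_sqrt_sum_squares)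
  also have "\<dots> \<le> sqrt 2 * sqrt (J_loss A B f g \<tau> (u n))"
    using residuals_sq_le_J_loss[OF tau] by simp
  also have "\<dots> \<le> sqrt 2 * sqrt (?Jh (u n) + \<delta> n + \<epsilon>)"
    using J_le \<open>\<delta> n \<ge> 0\<close> by simp
  finally have "C1 * norm (u n - ustar) \<le> sqrt 2 * sqrt (?Jh (u n) + \<delta> n + \<epsilon>)" .
  then show "norm (u n - ustar) \<le> sqrt 2 * inverse C1 * sqrt (?Jh (u n) + \<delta> n + \<epsilon>)"
    using C(1) by (simp add: field_simps)
qed

end
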